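(* Let $G$ be a simple graph with at least one edge, with largest Laplacian eigenvalue $\mu_1$. Then the largest $\mathcal{H}$-eigenvalue $\lambda_1$ of $G$ satisfies $\lambda_1\le\max\{\mu_1,\,3\max_{e\in E(G)}\triangle(e)\}$.
   Context: For an oriented edge $e$ write $e^-$ for its tail and $e^+$ for its head. For distinct edges $e,e'$: $e\leftrightarrow e'$ means $e^+=e'^-$ or $e'^+=e^-$; $e\overset{\pm}{\sim}e'$ means $e^+=e'^+$ or $e^-=e'^-$; $e\vartriangle e'$ means $e,e'$ are two edges of a common triangle. $\triangle(e)$ is the number of triangles of $G$ containing $e$. The Helmholtzian matrix $\mathcal{H}(G)=(h_{ee'})$ is indexed by edges, with $h_{ee}=\triangle(e)+2$, and for $e\ne e'$: $h_{ee'}=-1$ if $e\leftrightarrow e'$ and not $e\vartriangle e'$; $h_{ee'}=1$ if $e\overset{\pm}{\sim}e'$ and not $e\vartriangle e'$; $h_{ee'}=0$ otherwise. The $\mathcal{H}$-eigenvalues are the eigenvalues of $\mathcal{H}(G)$ for an arbitrary orientation (independent of the orientation). The Laplacian matrix is $L(G)=D(G)-A(G)$. *)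

theory Defs
  imports Complex_Main
begin

definition simple_graph :: "'a set \<Rightarrow> 'a set set \<Rightarrow> bool" where
  "simple_graph V E \<longleftrightarrow> finite V \<and> (\<forall>e\<in>E. e \<subseteq> V \<and> card e = 2)"

definition degree :: "'a set set \<Rightarrow> 'a \<Rightarrow> nat" where
  "degree E v = card {e\<in>E. v \<in> e}"

definition laplacian :: "'a set set \<Rightarrow> 'a \<Rightarrow> 'a \<Rightarrow> real" where
  "laplacian E u v = (if u = v then real (degree E u) else if {u, v} \<in> E then -1 else 0)"

definition is_triangle :: "'a set \<Rightarrow> 'a set set \<Rightarrow> 'a set \<Rightarrow> bool" where
  "is_triangle V E T \<longleftrightarrow> T \<subseteq> V \<and> card T = 3 \<and> (\<forall>x\<in>T. \<forall>y\<in>T. x \<noteq> y \<longrightarrow> {x, y} \<in> E)"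

definition tri :: "'a set \<Rightarrow> 'a set set \<Rightarrow> 'a set \<Rightarrow> nat" where
  "tri V E e = card {T. is_triangle V E T \<and> e \<subseteq> T}"

text \<open>Oriented edges are pairs (tail, head); und gives the underlying edge.\<close>
definition und :: "'a \<times> 'a \<Rightarrow> 'a set" where
  "und e = {fst e, snd e}"

definition orientation :: "'a set set \<Rightarrow> ('a \<times> 'a) set \<Rightarrow> bool" where
  "orientation E Or \<longleftrightarrow> (\<forall>e\<in>Or. und e \<in> E) \<and>
     (\<forall>e\<in>E. \<exists>!p. p \<in> Or \<and> und p = e)"

definition head_tail :: "'a \<times> 'a \<Rightarrow> 'a \<times> 'a \<Rightarrow> bool" where
  "head_tail e e' \<longleftrightarrow> snd e = fst e' \<or> snd e' = fst e"

definition same_end :: "'a \<times> 'a \<Rightarrow> 'a \<times> 'a \<Rightarrow> bool" where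
  "same_end e e' \<longleftrightarrow> snd e = snd e' \<or> fst e = fst e'"

definition in_common_triangle :: "'a set \<Rightarrow> 'a set set \<Rightarrow> 'a \<times> 'a \<Rightarrow> 'a \<times> 'a \<Rightarrow> bool" where
  "in_common_triangle V E e e' \<longleftrightarrow>
     (\<exists>T. is_triangle V E T \<and> und e \<subseteq> T \<and> und e' \<subseteq> T)"

definition helmholtzian :: "'a set \<Rightarrow> 'a set set \<Rightarrow> 'a \<times> 'a \<Rightarrow> 'a \<times> 'a \<Rightarrow> real" where
  "helmholtzian V E e e' =
     (if e = e' then real (tri V E (und e)) + 2
      else if head_tail e e' \<and> \<not> in_common_triangle V E e e' then -1
      else if same_end e e' \<and> \<not> in_common_triangle V E e e' then 1
      else 0)"

definition eigenvalue_on :: "'i set \<Rightarrow> ('i \<Rightarrow> 'i \<Rightarrow> real) \<Rightarrow> real \<Rightarrow> bool" where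
  "eigenvalue_on I M lam \<longleftrightarrow>
     (\<exists>x :: 'i \<Rightarrow> real. (\<exists>i\<in>I. x i \<noteq> 0) \<and>
        (\<forall>i\<in>I. (\<Sum>j\<in>I. M i j * x j) = lam * x i))"

definition largest_eigenvalue :: "'i set \<Rightarrow> ('i \<Rightarrow> 'i \<Rightarrow> real) \<Rightarrow> real" where
  "largest_eigenvalue I M = Max {lam. eigenvalue_on I M lam}"

end

(*
  Regard an arc function x as an antisymmetric flow on ordered pairs of vertices. Unfolding the
  entries of the Helmholtzian gives, for every arc (a, b),
    (H x)(a, b) = div x (b) - div x (a) + sum of curl x (a, b, c) over the triangles abc,
  with div x (v) the net inflow at v. In the divergence of the right-hand side the curl terms
  cancel in pairs (the triangle abc is seen from a and from c with opposite orientations), so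
  L (div x) = div (H x). Hence for an eigenvector x of the largest eigenvalue lam either
  div x is nonzero, and then lam is a Laplacian eigenvalue, or div x = 0; in the latter case,
  at an arc ab maximising |x|, every curl term is x(a, b) plus two terms of modulus at most
  |x(a, b)|, so |lam - t| <= 2 t, i.e. lam <= 3 t, for the number t of triangles on ab.
*)

theory Submission
  imports Defs "Jordan_Normal_Form.Spectral_Radius"
begin

section \<open>Eigenvalues of matrices indexed by finite sets\<close>

definition field_eigenvalue_on :: "'i set \<Rightarrow> ('i \<Rightarrow> 'i \<Rightarrow> 'b::field) \<Rightarrow> 'b \<Rightarrow> bool" where
  "field_eigenvalue_on I M k \<longleftrightarrow>
     (\<exists>x. (\<exists>i\<in>I. x i \<noteq> 0) \<and> (\<forall>i\<in>I. (\<Sum>j\<in>I. M i j * x j) = k * x i))"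

lemma eigenvalue_on_eq_field_eigenvalue_on: "eigenvalue_on = field_eigenvalue_on"
  by (simp add: fun_eq_iff eigenvalue_on_def field_eigenvalue_on_def)

lemma mat_reindex_eigen_equation_iff:
  fixes M :: "'i \<Rightarrow> 'i \<Rightarrow> 'b::field"
  assumes h: "bij_betw h {0..<n} I"
  shows "mat n n (\<lambda>(s, t). M (h s) (h t)) *\<^sub>v vec n (x \<circ> h) = k \<cdot>\<^sub>v vec n (x \<circ> h)
    \<longleftrightarrow> (\<forall>i\<in>I. (\<Sum>j\<in>I. M i j * x j) = k * x i)"
proof -
  have "(\<Sum>t<n. M (h s) (h t) * x (h t)) = (\<Sum>j\<in>I. M (h s) j * x j)" for s
    using sum.reindex_bij_betw[OF h, of "\<lambda>j. M (h s) j * x j"] by (simp add: lessThan_atLeast0)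
  then have "mat n n (\<lambda>(s, t). M (h s) (h t)) *\<^sub>v vec n (x \<circ> h) = k \<cdot>\<^sub>v vec n (x \<circ> h)
      \<longleftrightarrow> (\<forall>s<n. (\<Sum>j\<in>I. M (h s) j * x j) = k * x (h s))"
    by (auto simp: vec_eq_iff scalar_prod_def lessThan_atLeast0)
  also have "\<dots> \<longleftrightarrow> (\<forall>i\<in>I. (\<Sum>j\<in>I. M i j * x j) = k * x i)"
    using h by (auto simp: bij_betw_def)
  finally show ?thesis .
qed

lemma field_eigenvalue_on_iff_eigenvalue:
  fixes M :: "'i \<Rightarrow> 'i \<Rightarrow> 'b::field"
  assumes h: "bij_betw h {0..<n} I"
  shows "field_eigenvalue_on I M k \<longleftrightarrow> eigenvalue (mat n n (\<lambda>(s, t). M (h s) (h t))) k"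
proof -
  have nonzero: "vec n (x \<circ> h) \<noteq> 0\<^sub>v n \<longleftrightarrow> (\<exists>i\<in>I. x i \<noteq> 0)" for x :: "'i \<Rightarrow> 'b"
    using h by (auto simp: vec_eq_iff bij_betw_def)
  have "v = vec n ((\<lambda>i. v $ the_inv_into {0..<n} h i) \<circ> h)" if "v \<in> carrier_vec n" for v :: "'b vec"
    using that h by (auto simp: vec_eq_iff bij_betw_def the_inv_into_f_f)
  then have "(\<exists>v. eigenvector (mat n n (\<lambda>(s, t). M (h s) (h t))) v k)
      \<longleftrightarrow> (\<exists>x. eigenvector (mat n n (\<lambda>(s, t). M (h s) (h t))) (vec n (x \<circ> h)) k)"
    unfolding eigenvector_def by (metis dim_row_mat(1))
  then show ?thesis
    unfolding field_eigenvalue_on_def eigenvalue_def eigenvector_def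
    by (simp add: nonzero mat_reindex_eigen_equation_iff[OF h])
qed

lemma finite_field_eigenvalues_on:
  fixes M :: "'i \<Rightarrow> 'i \<Rightarrow> 'b::field"
  assumes "finite I"
  shows "finite {k. field_eigenvalue_on I M k}"
proof -
  obtain h where h: "bij_betw h {0..<card I} I"
    using ex_bij_betw_nat_finite[OF assms] by blast
  let ?A = "mat (card I) (card I) (\<lambda>(s, t). M (h s) (h t))"
  have A: "?A \<in> carrier_mat (card I) (card I)" by simp
  have "{k. field_eigenvalue_on I M k} = {k. poly (char_poly ?A) k = 0}"
    using field_eigenvalue_on_iff_eigenvalue[OF h] eigenvalue_root_char_poly[OF A] by auto
  moreover have "char_poly ?A \<noteq> 0"
    using degree_monic_char_poly[OF A] by auto
  ultimately show ?thesis
    using poly_roots_finite by simp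
qed

lemma eigenvalue_on_of_real_complex_eigenvalue:
  assumes "field_eigenvalue_on I (\<lambda>i j. complex_of_real (M i j)) (complex_of_real r)"
  shows "eigenvalue_on I M r"
proof -
  obtain x i0 where i0: "i0 \<in> I" "x i0 \<noteq> 0"
    and eq: "\<And>i. i \<in> I \<Longrightarrow> (\<Sum>j\<in>I. complex_of_real (M i j) * x j) = complex_of_real r * x i"
    using assms unfolding field_eigenvalue_on_def by blast
  have "(\<Sum>j\<in>I. M i j * Re (x j)) = r * Re (x i)" "(\<Sum>j\<in>I. M i j * Im (x j)) = r * Im (x i)"
    if "i \<in> I" for i
    using arg_cong[OF eq[OF that], of Re] arg_cong[OF eq[OF that], of Im] by (simp_all add: Re_sum Im_sum)
  moreover have "Re (x i0) \<noteq> 0 \<or> Im (x i0) \<noteq> 0"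
    using i0 complex_eq_iff by auto
  ultimately show ?thesis
    unfolding eigenvalue_on_def using i0 by metis
qed

lemma symmetric_complex_eigenvalue_real:
  fixes M :: "'i \<Rightarrow> 'i \<Rightarrow> real"
  assumes fin: "finite I" and sym: "\<And>i j. i \<in> I \<Longrightarrow> j \<in> I \<Longrightarrow> M i j = M j i"
    and ev: "field_eigenvalue_on I (\<lambda>i j. complex_of_real (M i j)) k"
  shows "Im k = 0"
proof -
  obtain x i0 where i0: "i0 \<in> I" "x i0 \<noteq> 0"
    and eq: "\<And>i. i \<in> I \<Longrightarrow> (\<Sum>j\<in>I. complex_of_real (M i j) * x j) = k * x i"
    using ev unfolding field_eigenvalue_on_def by blast
  define Q where "Q = (\<Sum>i\<in>I. \<Sum>j\<in>I. cnj (x i) * complex_of_real (M i j) * x j)"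
  define N where "N = (\<Sum>i\<in>I. (cmod (x i))\<^sup>2)"
  have "Q = (\<Sum>i\<in>I. cnj (x i) * (k * x i))"
    unfolding Q_def by (intro sum.cong refl) (simp add: eq mult.assoc flip: sum_distrib_left)
  also have "\<dots> = k * complex_of_real N"
    unfolding N_def of_real_sum
    by (simp add: sum_distrib_left complex_norm_square mult_ac del: of_real_power)
  finally have Q_eq: "Q = k * complex_of_real N" .
  have "cnj Q = (\<Sum>i\<in>I. \<Sum>j\<in>I. x i * complex_of_real (M i j) * cnj (x j))"
    unfolding Q_def cnj_sum by simp
  also have "\<dots> = (\<Sum>j\<in>I. \<Sum>i\<in>I. x i * complex_of_real (M i j) * cnj (x j))"
    by (rule sum.swap)
  also have "\<dots> = Q"
    unfolding Q_def by (intro sum.cong refl) (simp add: sym mult_ac)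
  finally have "cnj Q = Q" .
  moreover have "N > 0"
    unfolding N_def using fin i0 by (intro sum_pos2[of I i0]) auto
  ultimately show ?thesis
    using Q_eq by (simp add: complex_eq_iff)
qed

lemma symmetric_eigenvalue_on_exists:
  fixes M :: "'i \<Rightarrow> 'i \<Rightarrow> real"
  assumes fin: "finite I" and "I \<noteq> {}" and sym: "\<And>i j. i \<in> I \<Longrightarrow> j \<in> I \<Longrightarrow> M i j = M j i"
  shows "\<exists>r. eigenvalue_on I M r"
proof -
  obtain h where h: "bij_betw h {0..<card I} I"
    using ex_bij_betw_nat_finite[OF fin] by blast
  let ?M = "\<lambda>i j. complex_of_real (M i j)"
  let ?A = "mat (card I) (card I) (\<lambda>(s, t). ?M (h s) (h t))"
  have "card I > 0"
    using fin \<open>I \<noteq> {}\<close> by (simp add: card_gt_0_iff)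
  then obtain k where "eigenvalue ?A k"
    using spectrum_non_empty[of ?A "card I"] unfolding spectrum_def by auto
  then have ev: "field_eigenvalue_on I ?M k"
    using field_eigenvalue_on_iff_eigenvalue[OF h] by blast
  then have "k = complex_of_real (Re k)"
    using symmetric_complex_eigenvalue_real[OF fin sym] by (simp add: complex_eq_iff)
  then show ?thesis
    using ev eigenvalue_on_of_real_complex_eigenvalue by metis
qed

lemma largest_eigenvalue_is_eigenvalue:
  fixes M :: "'i \<Rightarrow> 'i \<Rightarrow> real"
  assumes "finite I" and "I \<noteq> {}" and "\<And>i j. i \<in> I \<Longrightarrow> j \<in> I \<Longrightarrow> M i j = M j i"
  shows "eigenvalue_on I M (largest_eigenvalue I M)"
proof -
  have "finite {r. eigenvalue_on I M r}" "{r. eigenvalue_on I M r} \<noteq> {}"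
    using finite_field_eigenvalues_on[OF assms(1)] symmetric_eigenvalue_on_exists[OF assms]
    by (auto simp: eigenvalue_on_eq_field_eigenvalue_on)
  then show ?thesis
    unfolding largest_eigenvalue_def using Max_in by blast
qed

lemma eigenvalue_le_largest_eigenvalue:
  fixes M :: "'i \<Rightarrow> 'i \<Rightarrow> real"
  assumes "finite I" and "eigenvalue_on I M r"
  shows "r \<le> largest_eigenvalue I M"
proof -
  have "finite {r. eigenvalue_on I M r}"
    using finite_field_eigenvalues_on[OF assms(1)] by (simp add: eigenvalue_on_eq_field_eigenvalue_on)
  then show ?thesis
    unfolding largest_eigenvalue_def using assms(2) by simp
qed

section \<open>Oriented graphs, triangles and flows\<close>

lemma helmholtzian_commute: "helmholtzian V E e e' = helmholtzian V E e' e"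
proof -
  have "head_tail e e' = head_tail e' e"
    unfolding head_tail_def by blast
  moreover have "same_end e e' = same_end e' e"
    unfolding same_end_def by auto
  moreover have "in_common_triangle V E e e' = in_common_triangle V E e' e"
    unfolding in_common_triangle_def by blast
  ultimately show ?thesis
    unfolding helmholtzian_def by simp
qed

lemma card_3_obtain_third:
  assumes "card T = 3" "a \<in> T" "b \<in> T" "a \<noteq> b"
  obtains c where "T = {a, b, c}"
proof -
  have "finite T"
    using assms(1) by (metis card.infinite zero_neq_numeral)
  then have "card (T - {a, b}) = 1"
    using assms by (simp add: card_Diff_subset)
  then obtain c where "T - {a, b} = {c}"
    by (auto simp: card_Suc_eq)
  then show ?thesis
    using that assms(2,3) by auto
qed

lemma sum_if_mem_0_eq_diff:
  fixes f :: "'a \<Rightarrow> 'b::ab_group_add"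
  assumes "finite A" "C \<subseteq> A"
  shows "(\<Sum>u\<in>A. if u \<in> C then 0 else f u) = sum f A - sum f C"
proof -
  have "(\<Sum>u\<in>A. if u \<in> C then 0 else f u) = sum f (A - C)"
    using assms(1) by (simp add: sum.If_cases Diff_eq)
  also have "\<dots> = sum f A - sum f C"
    using assms by (simp add: sum_diff finite_subset)
  finally show ?thesis .
qed

definition opposite :: "'a \<Rightarrow> 'a \<times> 'a \<Rightarrow> 'a" where
  "opposite b e = (if fst e = b then snd e else fst e)"

lemma und_opposite: "b \<in> und e \<Longrightarrow> und e = {opposite b e, b}"
  unfolding opposite_def und_def by (cases e) auto

locale oriented_graph =
  fixes V :: "'a set" and E :: "'a set set" and Or :: "('a \<times> 'a) set"
  assumes simple: "simple_graph V E" and oriented: "orientation E Or"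
begin

lemma finite_V: "finite V"
  using simple unfolding simple_graph_def by auto

lemma edge_subset: "e \<in> E \<Longrightarrow> e \<subseteq> V"
  using simple unfolding simple_graph_def by auto

lemma card_edge: "e \<in> E \<Longrightarrow> card e = 2"
  using simple unfolding simple_graph_def by auto

lemma finite_E: "finite E"
proof -
  have "E \<subseteq> Pow V"
    using edge_subset by auto
  then show ?thesis
    using finite_V finite_subset by blast
qed

lemma edge_distinct: "{u, w} \<in> E \<Longrightarrow> u \<noteq> w"
  using card_edge by fastforce

lemma edge_vertices: "{u, w} \<in> E \<Longrightarrow> u \<in> V \<and> w \<in> V"
  using edge_subset by auto

lemma und_arc: "e \<in> Or \<Longrightarrow> und e \<in> E"
  using oriented unfolding orientation_def by blast

lemma arc_edge: "(u, w) \<in> Or \<Longrightarrow> {u, w} \<in> E"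
  using und_arc unfolding und_def by force

lemma arc_eqI: "e \<in> Or \<Longrightarrow> e' \<in> Or \<Longrightarrow> und e = und e' \<Longrightarrow> e = e'"
  using oriented unfolding orientation_def by metis

lemma arc_distinct: "(u, w) \<in> Or \<Longrightarrow> u \<noteq> w"
  using arc_edge edge_distinct by blast

lemma arc_vertices: "(u, w) \<in> Or \<Longrightarrow> u \<in> V \<and> w \<in> V"
  using arc_edge edge_vertices by blast

lemma reverse_arc_notin: "(u, w) \<in> Or \<Longrightarrow> (w, u) \<notin> Or"
  using arc_eqI[of "(u, w)" "(w, u)"] arc_distinct by (auto simp: und_def insert_commute)

lemma edge_obtain_arc:
  assumes "e \<in> E"
  obtains p where "p \<in> Or" "und p = e"
  using assms oriented unfolding orientation_def by metis

lemma edge_iff_arc: "{u, w} \<in> E \<longleftrightarrow> (u, w) \<in> Or \<or> (w, u) \<in> Or"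
proof
  assume "{u, w} \<in> E"
  then obtain p where "p \<in> Or" "und p = {u, w}"
    by (rule edge_obtain_arc)
  then show "(u, w) \<in> Or \<or> (w, u) \<in> Or"
    unfolding und_def by (cases p) (auto simp: doubleton_eq_iff)
qed (auto dest: arc_edge simp: insert_commute)

lemma finite_Or: "finite Or"
proof -
  have "Or \<subseteq> V \<times> V"
    using arc_vertices by auto
  then show ?thesis
    using finite_V finite_subset by blast
qed

lemma Or_nonempty: "E \<noteq> {} \<Longrightarrow> Or \<noteq> {}"
  using edge_obtain_arc by blast

lemma is_triangle_insert_iff:
  "is_triangle V E {a, b, c} \<longleftrightarrow>
     a \<noteq> b \<and> b \<noteq> c \<and> a \<noteq> c \<and> {a, b} \<in> E \<and> {b, c} \<in> E \<and> {a, c} \<in> E"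
proof
  assume T: "is_triangle V E {a, b, c}"
  then have "card {a, b, c} = 3"
    unfolding is_triangle_def by auto
  then have "a \<noteq> b \<and> b \<noteq> c \<and> a \<noteq> c"
    by (auto simp: card_insert_if split: if_splits)
  with T show "a \<noteq> b \<and> b \<noteq> c \<and> a \<noteq> c \<and> {a, b} \<in> E \<and> {b, c} \<in> E \<and> {a, c} \<in> E"
    unfolding is_triangle_def by auto
next
  assume "a \<noteq> b \<and> b \<noteq> c \<and> a \<noteq> c \<and> {a, b} \<in> E \<and> {b, c} \<in> E \<and> {a, c} \<in> E"
  moreover from this have "{a, b, c} \<subseteq> V"
    using edge_vertices by blast
  ultimately show "is_triangle V E {a, b, c}"
    unfolding is_triangle_def by (auto simp: insert_commute)
qed

definition apexes :: "'a \<Rightarrow> 'a \<Rightarrow> 'a set" where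
  "apexes a b = {c \<in> V. is_triangle V E {a, b, c}}"

lemma apexes_commute: "apexes a b = apexes b a"
  unfolding apexes_def by (simp add: insert_commute)

lemma finite_apexes: "finite (apexes a b)"
  unfolding apexes_def using finite_V by simp

lemma apexesD: "c \<in> apexes a b \<Longrightarrow> {a, b} \<in> E \<and> c \<noteq> a \<and> c \<noteq> b \<and> c \<in> V"
  unfolding apexes_def is_triangle_insert_iff by auto

lemma apexes_subset: "apexes a b \<subseteq> V"
  using apexesD by blast

lemma ends_notin_apexes: "a \<notin> apexes a b" "b \<notin> apexes a b"
  using apexesD by blast+

lemma apex_swap: "c \<in> apexes u v \<Longrightarrow> u \<in> apexes c v"
  unfolding apexes_def is_triangle_def by (auto simp: insert_commute)

lemma tri_eq_card_apexes:
  assumes ab: "(a, b) \<in> Or"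
  shows "tri V E (und (a, b)) = card (apexes a b)"
proof -
  have "{T. is_triangle V E T \<and> und (a, b) \<subseteq> T} = (\<lambda>c. {a, b, c}) ` apexes a b"
  proof (rule Set.set_eqI, rule iffI)
    fix T assume "T \<in> {T. is_triangle V E T \<and> und (a, b) \<subseteq> T}"
    then have T: "is_triangle V E T" "a \<in> T" "b \<in> T"
      unfolding und_def by auto
    then obtain c where "T = {a, b, c}"
      using card_3_obtain_third[of T a b] arc_distinct[OF ab] unfolding is_triangle_def by blast
    with T show "T \<in> (\<lambda>c. {a, b, c}) ` apexes a b"
      unfolding apexes_def is_triangle_def by auto
  qed (auto simp: apexes_def und_def)
  moreover have "inj_on (\<lambda>c. {a, b, c}) (apexes a b)"
  proof (rule inj_onI)
    fix c c' assume "c \<in> apexes a b" "{a, b, c} = {a, b, c'}"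
    moreover have "c \<in> {a, b, c}"
      by blast
    ultimately show "c = c'"
      using apexesD by blast
  qed
  ultimately show ?thesis
    unfolding tri_def by (simp add: card_image)
qed

lemma in_common_triangle_iff_apex:
  assumes ab: "(a, b) \<in> Or" and u: "u \<in> und e'" "u \<notin> {a, b}" "und e' \<subseteq> {a, b, u}"
  shows "in_common_triangle V E (a, b) e' \<longleftrightarrow> u \<in> apexes a b"
proof
  assume "in_common_triangle V E (a, b) e'"
  then obtain T where T: "is_triangle V E T" "und (a, b) \<subseteq> T" "und e' \<subseteq> T"
    unfolding in_common_triangle_def by blast
  have "card T = 3" "a \<in> T" "b \<in> T"
    using T(1,2) unfolding is_triangle_def und_def by auto
  then obtain c where c: "T = {a, b, c}"
    using card_3_obtain_third arc_distinct[OF ab] by metis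
  have "u \<in> T"
    using T(3) u(1) by blast
  then have "u = c"
    using c u(2) by blast
  with T(1) c have "is_triangle V E {a, b, u}"
    by simp
  moreover from this have "u \<in> V"
    unfolding is_triangle_def by blast
  ultimately show "u \<in> apexes a b"
    unfolding apexes_def by blast
next
  assume "u \<in> apexes a b"
  then have "is_triangle V E {a, b, u}"
    unfolding apexes_def by blast
  moreover have "und (a, b) \<subseteq> {a, b, u}"
    unfolding und_def by auto
  ultimately show "in_common_triangle V E (a, b) e'"
    unfolding in_common_triangle_def using u(3) by blast
qed

definition flow :: "('a \<times> 'a \<Rightarrow> real) \<Rightarrow> 'a \<Rightarrow> 'a \<Rightarrow> real" where
  "flow x u w = (if (u, w) \<in> Or then x (u, w) else if (w, u) \<in> Or then - x (w, u) else 0)"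

lemma flow_antisym: "flow x u w = - flow x w u"
  unfolding flow_def using reverse_arc_notin by auto

lemma flow_arc: "(u, w) \<in> Or \<Longrightarrow> flow x u w = x (u, w)"
  unfolding flow_def by simp

lemma flow_nonedge: "{u, w} \<notin> E \<Longrightarrow> flow x u w = 0"
  unfolding flow_def using edge_iff_arc[of u w] by auto

lemma flow_scale: "(\<And>e. e \<in> Or \<Longrightarrow> y e = c * x e) \<Longrightarrow> flow y u w = c * flow x u w"
  unfolding flow_def by auto

lemma abs_flow_le: "(\<And>e. e \<in> Or \<Longrightarrow> \<bar>x e\<bar> \<le> m) \<Longrightarrow> 0 \<le> m \<Longrightarrow> \<bar>flow x u w\<bar> \<le> m"
  unfolding flow_def by auto

definition divergence :: "('a \<times> 'a \<Rightarrow> real) \<Rightarrow> 'a \<Rightarrow> real" where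
  "divergence x v = (\<Sum>u\<in>V. flow x u v)"

definition curl :: "('a \<times> 'a \<Rightarrow> real) \<Rightarrow> 'a \<Rightarrow> 'a \<Rightarrow> 'a \<Rightarrow> real" where
  "curl x a b c = flow x a b + flow x b c + flow x c a"

lemma curl_swap: "curl x v u c = - curl x u v c"
  unfolding curl_def using flow_antisym[of x] by (metis add.commute add.left_commute minus_add_distrib)

definition helmholtzian_mult :: "('a \<times> 'a \<Rightarrow> real) \<Rightarrow> 'a \<times> 'a \<Rightarrow> real" where
  "helmholtzian_mult x e = (\<Sum>e'\<in>Or. helmholtzian V E e e' * x e')"

section \<open>The Helmholtzian acting on flows\<close>

lemma bij_betw_opposite_incident_arcs:
  "bij_betw (opposite b) {e\<in>Or. b \<in> und e} {u\<in>V. {u, b} \<in> E}"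
proof (rule bij_betw_imageI)
  show "inj_on (opposite b) {e\<in>Or. b \<in> und e}"
    by (rule inj_onI) (metis (mono_tags, lifting) arc_eqI mem_Collect_eq und_opposite)
  have "opposite b e \<in> {u\<in>V. {u, b} \<in> E}" if "e \<in> Or" "b \<in> und e" for e
    using that und_opposite[of b e] und_arc[of e] edge_vertices by auto
  moreover have "u \<in> opposite b ` {e\<in>Or. b \<in> und e}" if u: "u \<in> V" "{u, b} \<in> E" for u
  proof -
    obtain p where p: "p \<in> Or" "und p = {u, b}"
      using edge_obtain_arc[OF u(2)] .
    then have "opposite b p = u"
      using und_opposite[of b p] edge_distinct[OF u(2)] by (auto simp: doubleton_eq_iff)
    with p show ?thesis
      by force
  qed
  ultimately show "opposite b ` {e\<in>Or. b \<in> und e} = {u\<in>V. {u, b} \<in> E}"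
    by blast
qed

lemma helmholtzian_entry_at_head:
  assumes ab: "(a, b) \<in> Or" and e': "e' \<in> Or" "b \<in> und e'" "e' \<noteq> (a, b)"
  shows "helmholtzian V E (a, b) e' * x e'
    = (if opposite b e' \<in> apexes a b then 0 else flow x (opposite b e') b)"
proof -
  define u where "u = opposite b e'"
  have ue: "und e' = {u, b}"
    using und_opposite[OF e'(2)] by (simp add: u_def)
  then have "e' = (b, u) \<or> e' = (u, b)"
    unfolding und_def by (cases e') (auto simp: doubleton_eq_iff)
  moreover have "u \<noteq> a"
    using arc_eqI[OF e'(1) ab] e'(3) ue by (auto simp: und_def insert_commute)
  moreover have "u \<noteq> b"
    using calculation(1) e'(1) arc_distinct by blast
  moreover have "in_common_triangle V E (a, b) e' \<longleftrightarrow> u \<in> apexes a b"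
    using calculation by (intro in_common_triangle_iff_apex[OF ab]) (auto simp: ue)
  ultimately show ?thesis
    using e' ab reverse_arc_notin arc_distinct[OF ab] unfolding u_def[symmetric]
    by (auto simp: helmholtzian_def head_tail_def same_end_def flow_def)
qed

lemma helmholtzian_entry_at_tail:
  assumes ab: "(a, b) \<in> Or" and e': "e' \<in> Or" "a \<in> und e'" "e' \<noteq> (a, b)"
  shows "helmholtzian V E (a, b) e' * x e'
    = (if opposite a e' \<in> apexes a b then 0 else flow x a (opposite a e'))"
proof -
  define u where "u = opposite a e'"
  have ue: "und e' = {u, a}"
    using und_opposite[OF e'(2)] by (simp add: u_def)
  then have "e' = (a, u) \<or> e' = (u, a)"
    unfolding und_def by (cases e') (auto simp: doubleton_eq_iff)
  moreover have "u \<noteq> b"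
    using arc_eqI[OF e'(1) ab] e'(3) ue by (auto simp: und_def)
  moreover have "u \<noteq> a"
    using calculation(1) e'(1) arc_distinct by blast
  moreover have "in_common_triangle V E (a, b) e' \<longleftrightarrow> u \<in> apexes a b"
    using calculation by (intro in_common_triangle_iff_apex[OF ab]) (auto simp: ue)
  ultimately show ?thesis
    using e' ab reverse_arc_notin arc_distinct[OF ab] unfolding u_def[symmetric]
    by (auto simp: helmholtzian_def head_tail_def same_end_def flow_def)
qed

lemma helmholtzian_entry_nonincident:
  assumes "a \<notin> und e'" "b \<notin> und e'"
  shows "helmholtzian V E (a, b) e' = 0"
  using assms unfolding helmholtzian_def head_tail_def same_end_def und_def by (cases e') auto

lemma sum_incident_arcs_remove:
  fixes g :: "'a \<Rightarrow> real"
  assumes e: "e \<in> Or" "v \<in> und e" and g: "\<And>u. {u, v} \<notin> E \<Longrightarrow> g u = 0"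
  shows "(\<Sum>e'\<in>{e'\<in>Or. v \<in> und e'} - {e}. g (opposite v e')) = (\<Sum>u\<in>V. g u) - g (opposite v e)"
proof -
  have "(\<Sum>e'\<in>{e'\<in>Or. v \<in> und e'} - {e}. g (opposite v e'))
      = (\<Sum>e'\<in>{e'\<in>Or. v \<in> und e'}. g (opposite v e')) - g (opposite v e)"
    using sum.remove[of "{e'\<in>Or. v \<in> und e'}" e "\<lambda>e'. g (opposite v e')"] e finite_Or by simp
  also have "(\<Sum>e'\<in>{e'\<in>Or. v \<in> und e'}. g (opposite v e')) = (\<Sum>u\<in>{u\<in>V. {u, v} \<in> E}. g u)"
    by (rule sum.reindex_bij_betw[OF bij_betw_opposite_incident_arcs])
  also have "\<dots> = (\<Sum>u\<in>V. g u)"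
    using finite_V g by (intro sum.mono_neutral_left) auto
  finally show ?thesis .
qed

lemma sum_arcs_at_head:
  assumes ab: "(a, b) \<in> Or"
  shows "(\<Sum>e'\<in>{e'\<in>Or. b \<in> und e'} - {(a, b)}. helmholtzian V E (a, b) e' * x e')
    = divergence x b - x (a, b) - (\<Sum>c\<in>apexes a b. flow x c b)"
proof -
  define g where "g u = (if u \<in> apexes a b then 0 else flow x u b)" for u
  have "(\<Sum>e'\<in>{e'\<in>Or. b \<in> und e'} - {(a, b)}. helmholtzian V E (a, b) e' * x e')
      = (\<Sum>e'\<in>{e'\<in>Or. b \<in> und e'} - {(a, b)}. g (opposite b e'))"
    using helmholtzian_entry_at_head[OF ab] by (intro sum.cong) (auto simp: g_def)
  also have "\<dots> = (\<Sum>u\<in>V. g u) - g a"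
    using sum_incident_arcs_remove[OF ab, of b g] flow_nonedge
    by (auto simp: und_def opposite_def g_def)
  also have "\<dots> = divergence x b - x (a, b) - (\<Sum>c\<in>apexes a b. flow x c b)"
    using finite_V apexes_subset ends_notin_apexes flow_arc[OF ab]
    by (simp add: g_def sum_if_mem_0_eq_diff divergence_def)
  finally show ?thesis .
qed

lemma sum_arcs_at_tail:
  assumes ab: "(a, b) \<in> Or"
  shows "(\<Sum>e'\<in>{e'\<in>Or. a \<in> und e'} - {(a, b)}. helmholtzian V E (a, b) e' * x e')
    = - divergence x a - x (a, b) - (\<Sum>c\<in>apexes a b. flow x a c)"
proof -
  define g where "g u = (if u \<in> apexes a b then 0 else flow x a u)" for u
  have "(\<Sum>e'\<in>{e'\<in>Or. a \<in> und e'} - {(a, b)}. helmholtzian V E (a, b) e' * x e')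
      = (\<Sum>e'\<in>{e'\<in>Or. a \<in> und e'} - {(a, b)}. g (opposite a e'))"
    using helmholtzian_entry_at_tail[OF ab] by (intro sum.cong) (auto simp: g_def)
  also have "\<dots> = (\<Sum>u\<in>V. g u) - g b"
    using sum_incident_arcs_remove[OF ab, of a g] flow_nonedge arc_distinct[OF ab]
    by (auto simp: und_def opposite_def g_def insert_commute)
  also have "(\<Sum>u\<in>V. flow x a u) = - divergence x a"
    unfolding divergence_def by (subst flow_antisym) (simp add: sum_negf)
  then have "(\<Sum>u\<in>V. g u) - g b = - divergence x a - x (a, b) - (\<Sum>c\<in>apexes a b. flow x a c)"
    using finite_V apexes_subset ends_notin_apexes flow_arc[OF ab]
    by (simp add: g_def sum_if_mem_0_eq_diff)
  finally show ?thesis .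
qed

lemma sum_curl_apexes:
  assumes ab: "(a, b) \<in> Or"
  shows "(\<Sum>c\<in>apexes a b. curl x a b c)
    = real (card (apexes a b)) * x (a, b) - (\<Sum>c\<in>apexes a b. flow x c b) - (\<Sum>c\<in>apexes a b. flow x a c)"
proof -
  have "curl x a b c = x (a, b) - flow x c b - flow x a c" for c
    unfolding curl_def flow_arc[OF ab] using flow_antisym[of x b c] flow_antisym[of x c a] by simp
  then show ?thesis
    by (simp add: sum_subtractf)
qed

lemma helmholtzian_mult_arc:
  assumes ab: "(a, b) \<in> Or"
  shows "helmholtzian_mult x (a, b) = divergence x b - divergence x a + (\<Sum>c\<in>apexes a b. curl x a b c)"
proof -
  let ?h = "\<lambda>e'. helmholtzian V E (a, b) e' * x e'"
  define Nb where "Nb = {e'\<in>Or. b \<in> und e'} - {(a, b)}"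
  define Na where "Na = {e'\<in>Or. a \<in> und e'} - {(a, b)}"
  have "Nb \<inter> Na = {}"
  proof -
    have "e' = (a, b)" if "e' \<in> Or" "a \<in> und e'" "b \<in> und e'" for e'
      using that und_opposite[of b e'] arc_distinct[OF ab]
      by (intro arc_eqI[OF _ ab]) (auto simp: und_def)
    then show ?thesis
      unfolding Na_def Nb_def by blast
  qed
  have "helmholtzian_mult x (a, b) = ?h (a, b) + (\<Sum>e'\<in>Or - {(a, b)}. ?h e')"
    unfolding helmholtzian_mult_def using finite_Or ab by (simp add: sum.remove)
  also have "(\<Sum>e'\<in>Or - {(a, b)}. ?h e') = (\<Sum>e'\<in>Nb \<union> Na. ?h e')"
    using finite_Or helmholtzian_entry_nonincident
    by (intro sum.mono_neutral_right) (auto simp: Na_def Nb_def)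
  also have "\<dots> = (\<Sum>e'\<in>Nb. ?h e') + (\<Sum>e'\<in>Na. ?h e')"
    using finite_Or \<open>Nb \<inter> Na = {}\<close> by (intro sum.union_disjoint) (auto simp: Na_def Nb_def)
  also have "?h (a, b) = (real (card (apexes a b)) + 2) * x (a, b)"
    unfolding helmholtzian_def using tri_eq_card_apexes[OF ab] by simp
  finally show ?thesis
    using sum_arcs_at_head[OF ab, of x] sum_arcs_at_tail[OF ab, of x] sum_curl_apexes[OF ab, of x]
    unfolding Na_def Nb_def by (simp add: algebra_simps)
qed

lemma flow_helmholtzian_mult:
  "flow (helmholtzian_mult x) u v
    = (if {u, v} \<in> E then divergence x v - divergence x u else 0) + (\<Sum>c\<in>apexes u v. curl x u v c)"
proof (cases "(u, v) \<in> Or")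
  case True
  then show ?thesis
    using helmholtzian_mult_arc arc_edge by (simp add: flow_arc)
next
  case uv: False
  show ?thesis
  proof (cases "(v, u) \<in> Or")
    case True
    have "flow (helmholtzian_mult x) u v = - helmholtzian_mult x (v, u)"
      using flow_antisym flow_arc[OF True] by metis
    also have "\<dots> = divergence x v - divergence x u + (\<Sum>c\<in>apexes u v. curl x u v c)"
      unfolding helmholtzian_mult_arc[OF True] apexes_commute[of v u] curl_swap[of x v u]
      by (simp add: sum_negf)
    finally show ?thesis
      using arc_edge[OF True] by (simp add: insert_commute)
  next
    case False
    then have "{u, v} \<notin> E"
      using uv edge_iff_arc by blast
    moreover from this have "apexes u v = {}"
      using apexesD by blast
    ultimately show ?thesis
      using flow_nonedge by simp
  qed
qed

lemma sum_curl_apexes_eq_0: "(\<Sum>u\<in>V. \<Sum>c\<in>apexes u v. curl x u v c) = 0"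
proof -
  define P where "P = Sigma V (\<lambda>u. apexes u v)"
  define f where "f p = curl x (fst p) v (snd p)" for p
  have swap_P: "prod.swap p \<in> P" if "p \<in> P" for p
  proof (cases p)
    case (Pair u c)
    with that have "c \<in> apexes u v"
      unfolding P_def by simp
    then have "c \<in> V" "u \<in> apexes c v"
      using apexesD apex_swap by simp_all
    with Pair show ?thesis
      unfolding P_def by simp
  qed
  have antisym: "f (prod.swap p) = - f p" for p
    unfolding f_def curl_def
    using flow_antisym[of x "snd p" v] flow_antisym[of x v "fst p"] flow_antisym[of x "fst p" "snd p"]
    by simp
  have "sum f P = (\<Sum>p\<in>P. f (prod.swap p))"
    by (rule sum.reindex_bij_witness[of P prod.swap prod.swap]) (simp_all add: swap_P)
  then have "sum f P = 0"
    by (simp add: antisym sum_negf)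
  moreover have "(\<Sum>u\<in>V. \<Sum>c\<in>apexes u v. curl x u v c) = sum f P"
    unfolding P_def f_def using finite_V finite_apexes by (simp add: sum.Sigma split_def)
  ultimately show ?thesis
    by simp
qed

lemma degree_eq_card_neighbours: "Defs.degree E v = card {u\<in>V. {u, v} \<in> E}"
proof -
  have "{e\<in>E. v \<in> e} = (\<lambda>u. {u, v}) ` {u\<in>V. {u, v} \<in> E}"
  proof (rule Set.set_eqI, rule iffI)
    fix e assume e: "e \<in> {e\<in>E. v \<in> e}"
    then obtain u where "e = {u, v}"
      using card_edge by (metis (no_types, lifting) card_2_iff insert_commute insertE mem_Collect_eq singletonD)
    with e show "e \<in> (\<lambda>u. {u, v}) ` {u\<in>V. {u, v} \<in> E}"
      using edge_vertices by auto
  qed auto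
  moreover have "inj_on (\<lambda>u. {u, v}) {u\<in>V. {u, v} \<in> E}"
    using edge_distinct by (auto intro!: inj_onI simp: doubleton_eq_iff)
  ultimately show ?thesis
    unfolding Defs.degree_def by (simp add: card_image)
qed

lemma laplacian_mult:
  assumes "v \<in> V"
  shows "(\<Sum>u\<in>V. laplacian E v u * f u) = (\<Sum>u\<in>V. if {u, v} \<in> E then f v - f u else 0)"
proof -
  have "{v, v} \<notin> E"
    using edge_distinct by blast
  then have L: "laplacian E v u * f u
      = (if u = v then real (Defs.degree E v) * f v else 0) - (if {u, v} \<in> E then f u else 0)" for u
    by (cases "u = v") (auto simp: laplacian_def insert_commute)
  have R: "(if {u, v} \<in> E then f v - f u else 0)
      = (if {u, v} \<in> E then f v else 0) - (if {u, v} \<in> E then f u else 0)" for u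
    by simp
  have "(\<Sum>u\<in>V. if {u, v} \<in> E then f v else 0) = real (Defs.degree E v) * f v"
    using finite_V by (simp add: degree_eq_card_neighbours flip: sum.inter_filter)
  then show ?thesis
    unfolding L R sum_subtractf using assms finite_V by simp
qed

lemma laplacian_mult_divergence:
  assumes "v \<in> V"
  shows "(\<Sum>u\<in>V. laplacian E v u * divergence x u) = divergence (helmholtzian_mult x) v"
proof -
  have "(\<Sum>u\<in>V. laplacian E v u * divergence x u)
      = (\<Sum>u\<in>V. flow (helmholtzian_mult x) u v - (\<Sum>c\<in>apexes u v. curl x u v c))"
    unfolding laplacian_mult[OF assms] flow_helmholtzian_mult by simp
  also have "\<dots> = divergence (helmholtzian_mult x) v"
    using sum_curl_apexes_eq_0 by (simp add: sum_subtractf divergence_def)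
  finally show ?thesis .
qed

lemma eigenvalue_laplacian_if_divergence_nonzero:
  assumes eig: "\<And>e. e \<in> Or \<Longrightarrow> helmholtzian_mult x e = lam * x e"
    and v0: "v0 \<in> V" "divergence x v0 \<noteq> 0"
  shows "eigenvalue_on V (laplacian E) lam"
proof -
  have "(\<Sum>u\<in>V. laplacian E v u * divergence x u) = lam * divergence x v" if "v \<in> V" for v
  proof -
    have "flow (helmholtzian_mult x) u v = lam * flow x u v" for u
      using flow_scale[of "helmholtzian_mult x" lam x] eig by blast
    then have "divergence (helmholtzian_mult x) v = lam * divergence x v"
      unfolding divergence_def by (simp add: sum_distrib_left)
    then show ?thesis
      using laplacian_mult_divergence[OF that] by simp
  qed
  with v0 show ?thesis
    unfolding eigenvalue_on_def by blast
qed

lemma helmholtzian_eigenvalue_le_if_divergence_free: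
  assumes eig: "\<And>e. e \<in> Or \<Longrightarrow> helmholtzian_mult x e = lam * x e"
    and nonzero: "\<exists>e\<in>Or. x e \<noteq> 0"
    and div_free: "\<And>v. v \<in> V \<Longrightarrow> divergence x v = 0"
  shows "lam \<le> 3 * real (Max (tri V E ` E))"
proof -
  obtain e0 where e0: "e0 \<in> Or" "\<bar>x e0\<bar> = Max ((\<lambda>e. \<bar>x e\<bar>) ` Or)"
    using Max_in[of "(\<lambda>e. \<bar>x e\<bar>) ` Or"] finite_Or nonzero by fastforce
  obtain a b where ab: "e0 = (a, b)"
    by (cases e0)
  define m where "m = \<bar>x (a, b)\<bar>"
  define C where "C = apexes a b"
  have max: "\<bar>x e\<bar> \<le> m" if "e \<in> Or" for e
    using e0 that finite_Or by (simp add: m_def ab)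
  have "m > 0"
    using nonzero max by force
  have arc: "(a, b) \<in> Or"
    using e0 ab by simp
  have "lam * x (a, b) = real (card C) * x (a, b) - (\<Sum>c\<in>C. flow x c b + flow x a c)"
    using eig[OF arc] helmholtzian_mult_arc[OF arc] sum_curl_apexes[OF arc] arc_vertices[OF arc] div_free
    by (simp add: C_def sum.distrib)
  then have "(real (card C) - lam) * x (a, b) = (\<Sum>c\<in>C. flow x c b + flow x a c)"
    by (simp add: algebra_simps)
  then have "\<bar>real (card C) - lam\<bar> * m = \<bar>\<Sum>c\<in>C. flow x c b + flow x a c\<bar>"
    unfolding m_def by (metis abs_mult)
  also have "\<dots> \<le> (\<Sum>c\<in>C. \<bar>flow x c b\<bar> + \<bar>flow x a c\<bar>)"
    by (intro order.trans[OF sum_abs] sum_mono abs_triangle_ineq)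
  also have "\<dots> \<le> (\<Sum>c\<in>C. 2 * m)"
  proof (rule sum_mono)
    have "0 \<le> m"
      using \<open>m > 0\<close> by simp
    then have "\<bar>flow x u w\<bar> \<le> m" for u w
      using abs_flow_le[of x m] max by blast
    then show "\<bar>flow x c b\<bar> + \<bar>flow x a c\<bar> \<le> 2 * m" for c
      by (metis add_mono mult_2)
  qed
  finally have "\<bar>real (card C) - lam\<bar> \<le> 2 * real (card C)"
    using \<open>m > 0\<close> by simp
  moreover have "tri V E (und (a, b)) \<le> Max (tri V E ` E)"
    using finite_E und_arc[OF arc] by (intro Max_ge) auto
  ultimately show ?thesis
    using tri_eq_card_apexes[OF arc] unfolding C_def by linarith
qed

end

theorem corollary5p3:
  fixes V :: "'a set" and E :: "'a set set" and Or :: "('a \<times> 'a) set"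
  assumes "simple_graph V E"
    and "E \<noteq> {}"
    and "orientation E Or"
  shows "largest_eigenvalue Or (helmholtzian V E)
         \<le> max (largest_eigenvalue V (laplacian E))
                (3 * real (Max ((tri V E) ` E)))"
proof -
  interpret oriented_graph V E Or
    using assms(1,3) by unfold_locales
  let ?lam = "largest_eigenvalue Or (helmholtzian V E)"
  have "eigenvalue_on Or (helmholtzian V E) ?lam"
    using finite_Or Or_nonempty[OF assms(2)] helmholtzian_commute
    by (rule largest_eigenvalue_is_eigenvalue)
  then obtain x where nonzero: "\<exists>e\<in>Or. x e \<noteq> 0"
    and eig: "\<And>e. e \<in> Or \<Longrightarrow> helmholtzian_mult x e = ?lam * x e"
    unfolding eigenvalue_on_def helmholtzian_mult_def by blast
  show ?thesis
  proof (cases "\<forall>v\<in>V. divergence x v = 0")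
    case True
    then show ?thesis
      using helmholtzian_eigenvalue_le_if_divergence_free[OF eig nonzero] by auto
  next
    case False
    then obtain v0 where "v0 \<in> V" "divergence x v0 \<noteq> 0"
      by blast
    then have "eigenvalue_on V (laplacian E) ?lam"
      using eigenvalue_laplacian_if_divergence_nonzero[OF eig] by blast
    then show ?thesis
      using eigenvalue_le_largest_eigenvalue[OF finite_V] by (simp add: le_max_iff_disj)
  qed
qed

end
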